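(* Let $G$ be a permutation group and $K$ a field with a $G$-action. Assume that for every open subgroup $U\subset G$ there is an open subgroup $U'\subset U$ such that for every $g\in G$ the subgroup $gU'g^{-1}\cap U$ has infinite index in $U$. Then $\mathrm{Sm}_K(G)$ has no non-zero projective objects.
   Context: A permutation group is a Hausdorff topological group admitting a base of open sets consisting of left and right translates of subgroups. $\mathrm{Sm}_K(G)$ is the category of smooth left modules over the skew group ring $K\langle G\rangle$ ($(a[g])(b[h])=ab^g[gh]$), smooth meaning every element has an open stabilizer. *)

theory Defs
  imports "HOL-Algebra.Coset" "HOL-Analysis.Analysis"
begin

definition topological_group :: "'g monoid \<Rightarrow> 'g topology \<Rightarrow> bool" where
  "topological_group G T \<longleftrightarrow> group G \<and> topspace T = carrier G
     \<and> continuous_map (prod_topology T T) T (\<lambda>(x, y). x \<otimes>\<^bsub>G\<^esub> y)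
     \<and> continuous_map T T (\<lambda>x. inv\<^bsub>G\<^esub> x)"

definition permutation_group :: "'g monoid \<Rightarrow> 'g topology \<Rightarrow> bool" where
  "permutation_group G T \<longleftrightarrow> topological_group G T \<and> Hausdorff_space T
     \<and> (\<exists>\<B>. (\<forall>B\<in>\<B>. openin T B \<and>
                  (\<exists>H g. subgroup H G \<and> g \<in> carrier G \<and>
                         (B = l_coset G g H \<or> B = r_coset G H g)))
          \<and> (\<forall>W x. openin T W \<and> x \<in> W \<longrightarrow> (\<exists>B\<in>\<B>. x \<in> B \<and> B \<subseteq> W)))"

definition open_subgroup :: "'g monoid \<Rightarrow> 'g topology \<Rightarrow> 'g set \<Rightarrow> bool" where
  "open_subgroup G T U \<longleftrightarrow> subgroup U G \<and> openin T U"

definition conj_set :: "'g monoid \<Rightarrow> 'g \<Rightarrow> 'g set \<Rightarrow> 'g set" where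
  "conj_set G g U = {g \<otimes>\<^bsub>G\<^esub> u \<otimes>\<^bsub>G\<^esub> inv\<^bsub>G\<^esub> g | u. u \<in> U}"

definition infinite_index :: "'g monoid \<Rightarrow> 'g set \<Rightarrow> 'g set \<Rightarrow> bool" where
  "infinite_index G H U \<longleftrightarrow> infinite {l_coset G u H | u. u \<in> U}"

definition field_action :: "'g monoid \<Rightarrow> ('g \<Rightarrow> 'k::field \<Rightarrow> 'k) \<Rightarrow> bool" where
  "field_action G \<sigma> \<longleftrightarrow>
     (\<forall>g\<in>carrier G. bij (\<sigma> g) \<and> (\<forall>a b. \<sigma> g (a + b) = \<sigma> g a + \<sigma> g b)
                     \<and> (\<forall>a b. \<sigma> g (a * b) = \<sigma> g a * \<sigma> g b) \<and> \<sigma> g 1 = 1)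
   \<and> (\<forall>a. \<sigma> \<one>\<^bsub>G\<^esub> a = a)
   \<and> (\<forall>g\<in>carrier G. \<forall>h\<in>carrier G. \<forall>a. \<sigma> (g \<otimes>\<^bsub>G\<^esub> h) a = \<sigma> g (\<sigma> h a))"

text \<open>A left K<G>-module, with (a[g])(b[h]) = a b^g [gh], is the same as a K-vector space
 V with an action of G by additive maps which are semilinear: g(a v) = a^g (g v).\<close>

record ('k, 'g, 'v) skew_module =
  vcarr :: "'v set"
  vzero :: 'v
  vadd :: "'v \<Rightarrow> 'v \<Rightarrow> 'v"
  vsmul :: "'k \<Rightarrow> 'v \<Rightarrow> 'v"
  vact :: "'g \<Rightarrow> 'v \<Rightarrow> 'v"

definition skew_group_module ::
  "'g monoid \<Rightarrow> ('g \<Rightarrow> 'k::field \<Rightarrow> 'k) \<Rightarrow> ('k, 'g, 'v) skew_module \<Rightarrow> bool" where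
  "skew_group_module G \<sigma> M \<longleftrightarrow>
     (let V = vcarr M; z = vzero M; ad = vadd M; sm = vsmul M; ac = vact M in
       z \<in> V
     \<and> (\<forall>x\<in>V. \<forall>y\<in>V. ad x y \<in> V)
     \<and> (\<forall>a. \<forall>x\<in>V. sm a x \<in> V)
     \<and> (\<forall>g\<in>carrier G. \<forall>x\<in>V. ac g x \<in> V)
     \<and> (\<forall>x\<in>V. \<forall>y\<in>V. \<forall>w\<in>V. ad (ad x y) w = ad x (ad y w))
     \<and> (\<forall>x\<in>V. \<forall>y\<in>V. ad x y = ad y x)
     \<and> (\<forall>x\<in>V. ad z x = x)
     \<and> (\<forall>x\<in>V. \<exists>y\<in>V. ad x y = z)
     \<and> (\<forall>a. \<forall>x\<in>V. \<forall>y\<in>V. sm a (ad x y) = ad (sm a x) (sm a y))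
     \<and> (\<forall>a b. \<forall>x\<in>V. sm (a + b) x = ad (sm a x) (sm b x))
     \<and> (\<forall>a b. \<forall>x\<in>V. sm (a * b) x = sm a (sm b x))
     \<and> (\<forall>x\<in>V. sm 1 x = x)
     \<and> (\<forall>g\<in>carrier G. \<forall>x\<in>V. \<forall>y\<in>V. ac g (ad x y) = ad (ac g x) (ac g y))
     \<and> (\<forall>g\<in>carrier G. \<forall>a. \<forall>x\<in>V. ac g (sm a x) = sm (\<sigma> g a) (ac g x))
     \<and> (\<forall>x\<in>V. ac \<one>\<^bsub>G\<^esub> x = x)
     \<and> (\<forall>g\<in>carrier G. \<forall>h\<in>carrier G. \<forall>x\<in>V. ac (g \<otimes>\<^bsub>G\<^esub> h) x = ac g (ac h x)))"

definition smooth_module ::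
  "'g monoid \<Rightarrow> 'g topology \<Rightarrow> ('g \<Rightarrow> 'k::field \<Rightarrow> 'k) \<Rightarrow> ('k, 'g, 'v) skew_module \<Rightarrow> bool" where
  "smooth_module G T \<sigma> M \<longleftrightarrow> skew_group_module G \<sigma> M
     \<and> (\<forall>x\<in>vcarr M. openin T {g \<in> carrier G. vact M g x = x})"

definition skew_hom ::
  "'g monoid \<Rightarrow> ('k::field, 'g, 'v) skew_module \<Rightarrow> ('k, 'g, 'w) skew_module \<Rightarrow> ('v \<Rightarrow> 'w) \<Rightarrow> bool" where
  "skew_hom G M N f \<longleftrightarrow>
     (\<forall>x\<in>vcarr M. f x \<in> vcarr N)
   \<and> (\<forall>x\<in>vcarr M. \<forall>y\<in>vcarr M. f (vadd M x y) = vadd N (f x) (f y))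
   \<and> (\<forall>a. \<forall>x\<in>vcarr M. f (vsmul M a x) = vsmul N a (f x))
   \<and> (\<forall>g\<in>carrier G. \<forall>x\<in>vcarr M. f (vact M g x) = vact N g (f x))"

text \<open>Projective object of Sm_K(G), tested against all epimorphisms (= surjective morphisms)
 between smooth modules whose underlying sets live in the type 'u.\<close>
definition sm_projective_in ::
  "'u itself \<Rightarrow> 'g monoid \<Rightarrow> 'g topology \<Rightarrow> ('g \<Rightarrow> 'k::field \<Rightarrow> 'k)
     \<Rightarrow> ('k, 'g, 'v) skew_module \<Rightarrow> bool" where
  "sm_projective_in (TYPE('u)) G T \<sigma> P \<longleftrightarrow>
     (\<forall>(M :: ('k, 'g, 'u) skew_module) (N :: ('k, 'g, 'u) skew_module) f h.
        smooth_module G T \<sigma> M \<and> smooth_module G T \<sigma> N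
        \<and> skew_hom G M N f \<and> f ` vcarr M = vcarr N \<and> skew_hom G P N h
        \<longrightarrow> (\<exists>l. skew_hom G P M l \<and> (\<forall>x\<in>vcarr P. f (l x) = h x)))"

text \<open>Projective in Sm_K(G); test objects are modules on the universe type
 ('v \<times> 'g set \<Rightarrow> 'k), which is large enough to contain (copies of) P, all
 permutation modules K[G/U] and direct sums of them indexed by elements of P.\<close>
abbreviation sm_projective ::
  "'g monoid \<Rightarrow> 'g topology \<Rightarrow> ('g \<Rightarrow> 'k::field \<Rightarrow> 'k) \<Rightarrow> ('k, 'g, 'v) skew_module \<Rightarrow> bool" where
  "sm_projective G T \<sigma> P \<equiv> sm_projective_in TYPE('v \<times> 'g set \<Rightarrow> 'k) G T \<sigma> P"

end

theory Submission
  imports Defs "HOL-Algebra.FiniteProduct" "HOL-Algebra.Group_Action" "HOL-Algebra.Left_Coset"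
begin

text \<open>
  Suppose \<open>P \<noteq> 0\<close> is projective, pick \<open>v \<noteq> 0\<close> in \<open>P\<close> with open stabilizer \<open>U\<close>, and take
  \<open>U' \<subseteq> U\<close> as in the hypothesis. The permutation module \<open>K[P \<times> G/U']\<close> maps onto \<open>P\<close> by
  \<open>(y, C) \<mapsto> y\<close>, so projectivity gives a section \<open>l\<close>, and \<open>l v\<close> is fixed by \<open>U\<close>.
  But \<open>U\<close> permutes the finite support of \<open>l v\<close>, so a nonzero \<open>l v\<close> would give a coset
  \<open>x U'\<close> with finite \<open>U\<close>-orbit, i.e. \<open>U \<inter> x U' x\<^sup>-\<^sup>1\<close> of finite index in \<open>U\<close>.
  Hence \<open>l v = 0\<close> and \<open>v = 0\<close>. Smoothness of \<open>K[P \<times> G/U']\<close> needs open stabilizers of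
  scalars, which a nonzero smooth \<open>P\<close> provides.
\<close>

section \<open>Cosets and conjugate subgroups\<close>

lemma finite_image_factor:
  assumes "finite (f ` A)" and "\<And>a b. a \<in> A \<Longrightarrow> b \<in> A \<Longrightarrow> f a = f b \<Longrightarrow> g a = g b"
  shows "finite (g ` A)"
proof -
  have "g ` A \<subseteq> (g \<circ> inv_into A f) ` f ` A"
  proof
    fix y assume "y \<in> g ` A"
    then obtain a where a: "a \<in> A" "y = g a" by blast
    have "g (inv_into A f (f a)) = g a"
      by (rule assms(2)) (use a inv_into_into[of "f a" f A] f_inv_into_f[of "f a" f A] in auto)
    then have "y = (g \<circ> inv_into A f) (f a)" using a by simp
    then show "y \<in> (g \<circ> inv_into A f) ` f ` A" using a(1) by blast
  qed
  then show ?thesis using assms(1) finite_subset by blast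
qed

context
  fixes G :: "'g monoid" (structure)
  assumes grp: "group G"
begin

interpretation group G by (rule grp)

lemma conj_set_eq_cosets: "conj_set G x H = r_coset G (l_coset G x H) (inv x)"
  by (auto simp: conj_set_def l_coset_def r_coset_def)

lemma subgroup_conj_set:
  assumes "x \<in> carrier G" "subgroup H G"
  shows "subgroup (conj_set G x H) G"
  using subgroup_conjugation_is_surj1[of "inv x" H] assms by (simp add: conj_set_eq_cosets)

lemma l_coset_conj_fixed:
  assumes H: "subgroup H G" and x: "x \<in> carrier G" and w: "w \<in> carrier G"
    and u: "inv x \<otimes> w \<otimes> x \<in> H"
  shows "l_coset G w (l_coset G x H) = l_coset G x H"
proof -
  let ?u = "inv x \<otimes> w \<otimes> x"
  have Hc: "H \<subseteq> carrier G" using H subgroup.subset by blast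
  have uH: "l_coset G ?u H = H"
    using l_repr_independence[of ?u \<one> H] u H Hc by (simp add: lcos_mult_one)
  have "l_coset G w (l_coset G x H) = l_coset G (w \<otimes> x) H"
    using Hc x w by (simp add: lcos_m_assoc)
  also have "w \<otimes> x = x \<otimes> ?u" using x w by (simp add: m_assoc[symmetric])
  also have "l_coset G (x \<otimes> ?u) H = l_coset G x (l_coset G ?u H)"
    using Hc x w by (simp add: lcos_m_assoc)
  finally show ?thesis using uH by simp
qed

lemma l_coset_eq_imp_conj:
  assumes H: "subgroup H G" and x: "x \<in> carrier G"
    and u: "u \<in> carrier G" "u' \<in> carrier G" and eq: "l_coset G u (l_coset G x H) = l_coset G u' (l_coset G x H)"
  shows "inv u \<otimes> u' \<in> conj_set G x H"
proof -
  have Hc: "H \<subseteq> carrier G" using H subgroup.subset by blast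
  have "u' \<otimes> x \<in> l_coset G (u \<otimes> x) H"
    using eq lcos_self[of "u' \<otimes> x" H] H x u by (simp add: lcos_m_assoc Hc)
  then obtain k where k: "k \<in> H" "u' \<otimes> x = u \<otimes> x \<otimes> k"
    unfolding l_coset_def by blast
  have kc: "k \<in> carrier G" using k(1) Hc by blast
  have "inv u \<otimes> u' = inv u \<otimes> (u' \<otimes> x) \<otimes> inv x" using x u by (simp add: m_assoc)
  also have "\<dots> = x \<otimes> k \<otimes> inv x" using k(2) x u kc by (simp add: m_assoc[symmetric])
  finally have "inv u \<otimes> u' = x \<otimes> k \<otimes> inv x" .
  then show ?thesis using k(1) unfolding conj_set_def by blast
qed

text \<open>Orbit-stabilizer: the stabilizer of \<open>x H\<close> in \<open>U\<close> is \<open>U \<inter> x H x\<^sup>-\<^sup>1\<close>.\<close>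

lemma finite_orbit_imp_finite_index:
  assumes U: "subgroup U G" and H: "subgroup H G" and x: "x \<in> carrier G"
    and fin: "finite ((\<lambda>u. l_coset G u (l_coset G x H)) ` U)"
  shows "\<not> infinite_index G (conj_set G x H \<inter> U) U"
proof -
  let ?K = "conj_set G x H \<inter> U"
  have K: "subgroup ?K G"
    by (rule subgroups_Inter_pair[OF subgroup_conj_set[OF x H] U])
  have "l_coset G u ?K = l_coset G u' ?K"
    if "u \<in> U" "u' \<in> U" "l_coset G u (l_coset G x H) = l_coset G u' (l_coset G x H)" for u u'
  proof -
    have uc: "u \<in> carrier G" "u' \<in> carrier G" using subgroup.mem_carrier[OF U] that(1,2) by auto
    have "inv u \<otimes> u' \<in> ?K"
      using l_coset_eq_imp_conj[OF H x uc that(3)]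
        subgroup.m_closed[OF U subgroup.m_inv_closed[OF U that(1)] that(2)] by blast
    moreover have "u' = u \<otimes> (inv u \<otimes> u')" using uc by (simp add: m_assoc[symmetric])
    ultimately have "u' \<in> l_coset G u ?K" unfolding l_coset_def by blast
    then show ?thesis by (rule l_repr_independence[OF _ uc(1) K])
  qed
  then have "finite ((\<lambda>u. l_coset G u ?K) ` U)"
    by (rule finite_image_factor[OF fin])
  moreover have "{l_coset G u ?K | u. u \<in> U} = (\<lambda>u. l_coset G u ?K) ` U" by blast
  ultimately show ?thesis by (simp add: infinite_index_def)
qed

end

section \<open>Topological groups and actions on sets\<close>

text \<open>
  HOL-Algebra's \<open>group_action\<close> requires extensional bijections; actions such as \<open>vact M\<close>
  are not extensional, hence this plain notion.
\<close>

definition set_action :: "'g monoid \<Rightarrow> 'x set \<Rightarrow> ('g \<Rightarrow> 'x \<Rightarrow> 'x) \<Rightarrow> bool" where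
  "set_action G X a \<longleftrightarrow> (\<forall>g\<in>carrier G. \<forall>p\<in>X. a g p \<in> X) \<and> (\<forall>p\<in>X. a \<one>\<^bsub>G\<^esub> p = p)
     \<and> (\<forall>g\<in>carrier G. \<forall>h\<in>carrier G. \<forall>p\<in>X. a (g \<otimes>\<^bsub>G\<^esub> h) p = a g (a h p))"

context
  fixes G :: "'g monoid" (structure)
begin

lemma topological_groupD:
  assumes "topological_group G T"
  shows "group G" and "topspace T = carrier G"
    and "continuous_map (prod_topology T T) T (\<lambda>(x, y). x \<otimes> y)"
  using assms unfolding topological_group_def by blast+

lemma continuous_map_two_sided_translation:
  assumes tg: "topological_group G T" and a: "a \<in> carrier G" and b: "b \<in> carrier G"
  shows "continuous_map T T (\<lambda>z. a \<otimes> z \<otimes> b)"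
proof -
  note top = topological_groupD(2)[OF tg] and mult = topological_groupD(3)[OF tg]
  have "continuous_map T (prod_topology T T) (\<lambda>z. (a, z))"
    by (intro continuous_map_pairedI) (auto simp: top a)
  from continuous_map_compose[OF this mult]
  have left: "continuous_map T T (\<lambda>z. a \<otimes> z)" by (simp add: o_def)
  have "continuous_map T (prod_topology T T) (\<lambda>z. (a \<otimes> z, b))"
    by (intro continuous_map_pairedI left) (auto simp: top b)
  from continuous_map_compose[OF this mult] show ?thesis by (simp add: o_def)
qed

lemma openin_translate_preimage:
  assumes "topological_group G T" "a \<in> carrier G" "b \<in> carrier G" "openin T W"
  shows "openin T {z \<in> carrier G. a \<otimes> z \<otimes> b \<in> W}"
proof -
  have "{z \<in> carrier G. a \<otimes> z \<otimes> b \<in> W}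
      = {z \<in> topspace T. a \<otimes> z \<otimes> b \<in> W}"
    by (simp only: topological_groupD(2)[OF assms(1)])
  with openin_continuous_map_preimage[OF continuous_map_two_sided_translation[OF assms(1-3)] assms(4)]
  show ?thesis by (simp only:)
qed

lemma openin_subgroupI:
  assumes tg: "topological_group G T" and H: "subgroup H G"
    and W: "openin T W" "\<one> \<in> W" "W \<subseteq> H"
  shows "openin T H"
proof (subst openin_subopen, intro ballI)
  interpret group G by (rule topological_groupD(1)[OF tg])
  fix h assume h: "h \<in> H"
  have hc: "h \<in> carrier G" by (rule subgroup.mem_carrier[OF H h])
  let ?N = "{z \<in> carrier G. inv h \<otimes> z \<otimes> \<one> \<in> W}"
  have "openin T ?N" using openin_translate_preimage[OF tg _ _ W(1)] hc by simp
  moreover have "h \<in> ?N" using hc W(2) by simp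
  moreover have "?N \<subseteq> H"
  proof
    fix z assume "z \<in> ?N"
    then have z: "z \<in> carrier G" "inv h \<otimes> z \<in> H" using W(3) hc by auto
    then have "h \<otimes> (inv h \<otimes> z) \<in> H" using subgroup.m_closed[OF H h] by blast
    then show "z \<in> H" using hc z(1) by (simp add: m_assoc[symmetric])
  qed
  ultimately show "\<exists>N. openin T N \<and> h \<in> N \<and> N \<subseteq> H" by blast
qed

lemma set_action_inv_cancel:
  assumes grp: "group G" and act: "set_action G X a" and g: "g \<in> carrier G" and p: "p \<in> X"
  shows "a (inv g) (a g p) = p" and "a g (a (inv g) p) = p"
proof -
  interpret group G by (rule grp)
  have one: "a \<one> p = p"
    and comp: "\<And>h k. h \<in> carrier G \<Longrightarrow> k \<in> carrier G \<Longrightarrow> a (h \<otimes> k) p = a h (a k p)"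
    using act p unfolding set_action_def by auto
  show "a (inv g) (a g p) = p" using comp[of "inv g" g] one g by simp
  show "a g (a (inv g) p) = p" using comp[of g "inv g"] one g by simp
qed

lemma subgroup_stabilizer:
  assumes grp: "group G" and act: "set_action G X a" and p: "p \<in> X"
  shows "subgroup (stabilizer G a p) G"
proof -
  interpret group G by (rule grp)
  show ?thesis
  proof (rule subgroupI)
    show "stabilizer G a p \<noteq> {}" using act p by (force simp: stabilizer_def set_action_def)
    show "inv g \<in> stabilizer G a p" if "g \<in> stabilizer G a p" for g
      using set_action_inv_cancel(1)[OF grp act _ p, of g] that by (simp add: stabilizer_def)
    show "g \<otimes> h \<in> stabilizer G a p" if "g \<in> stabilizer G a p" "h \<in> stabilizer G a p" for g h
      using act p that by (simp add: stabilizer_def set_action_def)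
  qed (auto simp: stabilizer_def)
qed

lemma set_action_map_prod:
  assumes "set_action G X a" "set_action G Y b"
  shows "set_action G (X \<times> Y) (\<lambda>g. map_prod (a g) (b g))"
  using assms by (auto simp: set_action_def)

lemma stabilizer_map_prod:
  "stabilizer G (\<lambda>g. map_prod (a g) (b g)) (x, y) = stabilizer G a x \<inter> stabilizer G b y"
  by (auto simp: stabilizer_def)

lemma set_action_lcosets:
  assumes grp: "group G" and H: "subgroup H G"
  shows "set_action G (lcosets H) (l_coset G)"
proof -
  interpret group G by (rule grp)
  have "C \<subseteq> carrier G" if "C \<in> lcosets H" for C
    using that subgroup.lcosets_carrier[OF H] by (auto simp: LCOSETS_def l_coset_subset_G H subgroup.subset)
  then show ?thesis
    unfolding set_action_def LCOSETS_def using H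
    by (auto simp: lcos_m_assoc lcos_mult_one subgroup.subset)
qed

lemma set_action_field_action: "field_action G \<sigma> \<Longrightarrow> set_action G UNIV \<sigma>"
  by (simp add: field_action_def set_action_def)

lemma set_action_skew_group_module: "skew_group_module G \<sigma> M \<Longrightarrow> set_action G (vcarr M) (vact M)"
  by (simp add: skew_group_module_def set_action_def Let_def)

lemma openin_lcoset_stabilizer:
  assumes tg: "topological_group G T" and H: "subgroup H G" "openin T H"
    and C: "C \<in> lcosets H"
  shows "openin T (stabilizer G (l_coset G) C)"
proof -
  note grp = topological_groupD(1)[OF tg]
  interpret group G by (rule grp)
  obtain x where x: "x \<in> carrier G" "C = l_coset G x H" using C by (auto simp: LCOSETS_def)
  let ?W = "{w \<in> carrier G. inv x \<otimes> w \<otimes> x \<in> H}"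
  show ?thesis
  proof (rule openin_subgroupI[OF tg _ _ _ subsetI])
    show "subgroup (stabilizer G (l_coset G) C) G"
      by (rule subgroup_stabilizer[OF grp set_action_lcosets[OF grp H(1)] C])
    show "openin T ?W" using openin_translate_preimage[OF tg _ x(1) H(2)] x(1) by simp
    show "\<one> \<in> ?W" using x(1) subgroup.one_closed[OF H(1)] by simp
    show "w \<in> stabilizer G (l_coset G) C" if "w \<in> ?W" for w
      using l_coset_conj_fixed[OF grp H(1) x(1)] that x(2) by (simp add: stabilizer_def)
  qed
qed

end

section \<open>Skew group modules\<close>

definition vadd_monoid :: "('k, 'g, 'v) skew_module \<Rightarrow> 'v monoid" where
  "vadd_monoid M = \<lparr>carrier = vcarr M, monoid.mult = vadd M, one = vzero M\<rparr>"

definition vsum :: "('k, 'g, 'v) skew_module \<Rightarrow> ('a \<Rightarrow> 'v) \<Rightarrow> 'a set \<Rightarrow> 'v" where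
  "vsum M F S = finprod (vadd_monoid M) F S"

locale skew_group_mod =
  fixes G :: "'g monoid" and \<sigma> :: "'g \<Rightarrow> 'k::field \<Rightarrow> 'k" and M :: "('k, 'g, 'v) skew_module"
  assumes skew: "skew_group_module G \<sigma> M"
begin

abbreviation "V \<equiv> vcarr M"
abbreviation "z \<equiv> vzero M"
abbreviation "ad \<equiv> vadd M"
abbreviation "sm \<equiv> vsmul M"
abbreviation "ac \<equiv> vact M"

lemmas skew_axioms = skew[unfolded skew_group_module_def Let_def]

lemma zero_closed: "z \<in> V"
  using skew_axioms by auto

lemma add_closed: "x \<in> V \<Longrightarrow> y \<in> V \<Longrightarrow> ad x y \<in> V"
  using skew_axioms by auto

lemma smult_closed: "x \<in> V \<Longrightarrow> sm a x \<in> V"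
  using skew_axioms by auto

lemma act_closed: "g \<in> carrier G \<Longrightarrow> x \<in> V \<Longrightarrow> ac g x \<in> V"
  using skew_axioms by auto

lemma add_assoc: "x \<in> V \<Longrightarrow> y \<in> V \<Longrightarrow> w \<in> V \<Longrightarrow> ad (ad x y) w = ad x (ad y w)"
  using skew_axioms by auto

lemma add_commute: "x \<in> V \<Longrightarrow> y \<in> V \<Longrightarrow> ad x y = ad y x"
  using skew_axioms by auto

lemma add_zero_left: "x \<in> V \<Longrightarrow> ad z x = x"
  using skew_axioms by auto

lemma smult_add_right: "x \<in> V \<Longrightarrow> y \<in> V \<Longrightarrow> sm a (ad x y) = ad (sm a x) (sm a y)"
  using skew_axioms by auto

lemma smult_add_left: "x \<in> V \<Longrightarrow> sm (a + b) x = ad (sm a x) (sm b x)"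
  using skew_axioms by auto

lemma smult_mult: "x \<in> V \<Longrightarrow> sm (a * b) x = sm a (sm b x)"
  using skew_axioms by auto

lemma smult_one: "x \<in> V \<Longrightarrow> sm 1 x = x"
  using skew_axioms by auto

lemma act_add: "g \<in> carrier G \<Longrightarrow> x \<in> V \<Longrightarrow> y \<in> V \<Longrightarrow> ac g (ad x y) = ad (ac g x) (ac g y)"
  using skew_axioms by auto

lemma act_smult: "g \<in> carrier G \<Longrightarrow> x \<in> V \<Longrightarrow> ac g (sm a x) = sm (\<sigma> g a) (ac g x)"
  using skew_axioms by auto

lemma add_inverse: "x \<in> V \<Longrightarrow> \<exists>y\<in>V. ad x y = z"
  using skew_axioms by meson

lemma vadd_monoid_simps [simp]:
  "carrier (vadd_monoid M) = V" "monoid.mult (vadd_monoid M) = ad" "one (vadd_monoid M) = z"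
  by (simp_all add: vadd_monoid_def)

lemma comm_group_vadd_monoid: "comm_group (vadd_monoid M)"
proof (rule comm_groupI, unfold vadd_monoid_simps)
  show "\<exists>y\<in>V. ad y x = z" if "x \<in> V" for x
    using add_inverse[OF that] add_commute that by metis
qed (auto simp: zero_closed add_closed add_assoc add_zero_left intro: add_commute)

interpretation A: comm_group "vadd_monoid M" by (rule comm_group_vadd_monoid)

lemma add_right_eq_self: "x \<in> V \<Longrightarrow> y \<in> V \<Longrightarrow> ad x y = x \<Longrightarrow> y = z"
  using A.l_cancel_one[of x y] by simp

lemma smult_zero_right: "sm a z = z"
proof -
  have "ad (sm a z) (sm a z) = sm a (ad z z)"
    using smult_add_right[OF zero_closed zero_closed] by (rule sym)
  then have "ad (sm a z) (sm a z) = sm a z" by (simp only: add_zero_left[OF zero_closed])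
  then show ?thesis using add_right_eq_self smult_closed zero_closed by blast
qed

lemma smult_zero_left:
  assumes x: "x \<in> V" shows "sm 0 x = z"
proof -
  have "ad (sm 0 x) (sm 0 x) = sm (0 + 0) x" using smult_add_left[OF x] by (rule sym)
  then have "ad (sm 0 x) (sm 0 x) = sm 0 x" by (simp only: add_0_right)
  then show ?thesis using add_right_eq_self smult_closed x by blast
qed

lemma act_zero:
  assumes g: "g \<in> carrier G" shows "ac g z = z"
proof -
  have "ad (ac g z) (ac g z) = ac g (ad z z)"
    using act_add[OF g zero_closed zero_closed] by (rule sym)
  then have "ad (ac g z) (ac g z) = ac g z" by (simp only: add_zero_left[OF zero_closed])
  then show ?thesis using add_right_eq_self act_closed[OF g] zero_closed by blast
qed

lemma smult_right_cancel:
  assumes x: "x \<in> V" "x \<noteq> z" and eq: "sm a x = sm b x"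
  shows "a = b"
proof (rule ccontr)
  assume "a \<noteq> b"
  have "sm (a - b) x = ad (sm a x) (sm (- b) x)" using smult_add_left[OF x(1), of a "- b"] by simp
  also have "\<dots> = sm (b + - b) x" using eq smult_add_left[OF x(1), of b "- b"] by simp
  finally have "sm (a - b) x = z" using smult_zero_left[OF x(1)] by simp
  then have "sm (inverse (a - b)) (sm (a - b) x) = z" by (simp add: smult_zero_right)
  then show False using \<open>a \<noteq> b\<close> x by (simp add: smult_mult[symmetric] smult_one)
qed

lemma vsum_closed: "(\<And>i. i \<in> S \<Longrightarrow> F i \<in> V) \<Longrightarrow> vsum M F S \<in> V"
  unfolding vsum_def using A.finprod_closed[of F S] by auto

lemma vsum_empty [simp]: "vsum M F {} = z"
  by (simp add: vsum_def)

lemma vsum_singleton: "F a \<in> V \<Longrightarrow> vsum M F {a} = F a"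
  unfolding vsum_def using A.r_one[of "F a"] by simp

lemma vsum_add:
  "(\<And>i. i \<in> S \<Longrightarrow> F i \<in> V) \<Longrightarrow> (\<And>i. i \<in> S \<Longrightarrow> F' i \<in> V) \<Longrightarrow>
   vsum M (\<lambda>i. ad (F i) (F' i)) S = ad (vsum M F S) (vsum M F' S)"
  unfolding vsum_def using A.finprod_multf[of F S F'] by auto

lemma vsum_cong:
  "(\<And>i. i \<in> S \<Longrightarrow> F i = F' i) \<Longrightarrow> (\<And>i. i \<in> S \<Longrightarrow> F' i \<in> V) \<Longrightarrow> vsum M F S = vsum M F' S"
  unfolding vsum_def by (intro A.finprod_cong') auto

lemma vsum_mono_neutral:
  assumes "finite B" "S \<subseteq> B" "\<And>i. i \<in> B - S \<Longrightarrow> F i = z" "\<And>i. i \<in> B \<Longrightarrow> F i \<in> V"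
  shows "vsum M F S = vsum M F B"
  unfolding vsum_def using assms by (intro A.finprod_mono_neutral_cong_left) auto

lemma vsum_reindex:
  "inj_on h S \<Longrightarrow> (\<And>i. i \<in> h ` S \<Longrightarrow> F i \<in> V) \<Longrightarrow> vsum M F (h ` S) = vsum M (\<lambda>i. F (h i)) S"
  unfolding vsum_def by (intro A.finprod_reindex) auto

lemma additive_vsum:
  assumes "\<And>x. x \<in> V \<Longrightarrow> \<phi> x \<in> V" "\<And>x y. x \<in> V \<Longrightarrow> y \<in> V \<Longrightarrow> \<phi> (ad x y) = ad (\<phi> x) (\<phi> y)"
    and "\<phi> z = z" and "\<And>i. i \<in> S \<Longrightarrow> F i \<in> V"
  shows "\<phi> (vsum M F S) = vsum M (\<lambda>i. \<phi> (F i)) S"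
proof (cases "finite S")
  case True
  then show ?thesis using assms(4)
  proof (induct S rule: finite_induct)
    case (insert a S)
    then have "vsum M F (insert a S) = ad (F a) (vsum M F S)"
      and "vsum M (\<lambda>i. \<phi> (F i)) (insert a S) = ad (\<phi> (F a)) (vsum M (\<lambda>i. \<phi> (F i)) S)"
      using assms(1) by (simp_all add: vsum_def Pi_def)
    then show ?case using insert assms(2) vsum_closed[of S F] by simp
  qed (simp add: assms(3))
qed (simp add: assms(3) vsum_def)

end

lemma field_action_zero:
  assumes "field_action G \<sigma>" "g \<in> carrier G"
  shows "\<sigma> g 0 = 0"
proof -
  have "\<sigma> g 0 + \<sigma> g 0 = \<sigma> g 0 + 0"
    using assms unfolding field_action_def by (metis add_0_right)
  then show ?thesis by (rule add_left_imp_eq)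
qed

lemma field_action_eq_zero_iff:
  assumes "field_action G \<sigma>" "g \<in> carrier G"
  shows "\<sigma> g c = 0 \<longleftrightarrow> c = 0"
  using assms field_action_zero[OF assms] unfolding field_action_def by (metis bij_pointE)

lemma open_subgroup_stabilizer:
  assumes tg: "topological_group G T" and P: "smooth_module G T \<sigma> P" and v: "v \<in> vcarr P"
  shows "open_subgroup G T (stabilizer G (vact P) v)"
proof -
  have "set_action G (vcarr P) (vact P)"
    using P set_action_skew_group_module by (auto simp: smooth_module_def)
  then show ?thesis
    using subgroup_stabilizer[OF topological_groupD(1)[OF tg] _ v] P v
    by (simp add: open_subgroup_def smooth_module_def stabilizer_def)
qed

text \<open>\<open>\<sigma>\<close> carries no topology of its own; whatever fixes \<open>v \<noteq> 0\<close> and \<open>c v\<close> fixes \<open>c\<close>.\<close>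

lemma openin_field_stabilizer:
  assumes tg: "topological_group G T" and fa: "field_action G \<sigma>"
    and P: "smooth_module G T \<sigma> P" and v: "v \<in> vcarr P" "v \<noteq> vzero P"
  shows "openin T (stabilizer G \<sigma> c)"
proof -
  note grp = topological_groupD(1)[OF tg]
  have skew: "skew_group_module G \<sigma> P" using P by (simp add: smooth_module_def)
  interpret P: skew_group_mod G \<sigma> P by (rule skew_group_mod.intro[OF skew])
  have stab: "openin T (stabilizer G (vact P) y)" "subgroup (stabilizer G (vact P) y) G"
    if "y \<in> vcarr P" for y
    using open_subgroup_stabilizer[OF tg P that] by (simp_all add: open_subgroup_def)
  let ?W = "stabilizer G (vact P) v \<inter> stabilizer G (vact P) (vsmul P c v)"
  show ?thesis
  proof (rule openin_subgroupI[OF tg _ _ _ subsetI])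
    show "subgroup (stabilizer G \<sigma> c) G"
      using subgroup_stabilizer[OF grp set_action_field_action[OF fa]] by simp
    show "openin T ?W" using stab v P.smult_closed by blast
    show "\<one>\<^bsub>G\<^esub> \<in> ?W" using stab v P.smult_closed subgroup.one_closed by blast
    fix w assume w: "w \<in> ?W"
    then have "vsmul P (\<sigma> w c) v = vsmul P c v"
      using P.act_smult[of w v c] v(1) by (simp add: stabilizer_def)
    then show "w \<in> stabilizer G \<sigma> c"
      using P.smult_right_cancel[OF v] w by (simp add: stabilizer_def)
  qed
qed

section \<open>Permutation modules\<close>

text \<open>\<open>K[X]\<close>: the action sends the indicator of \<open>p\<close> to the indicator of \<open>a g p\<close>.\<close>

definition perm_module ::
  "'g monoid \<Rightarrow> ('g \<Rightarrow> 'k::field \<Rightarrow> 'k) \<Rightarrow> 'x set \<Rightarrow> ('g \<Rightarrow> 'x \<Rightarrow> 'x) \<Rightarrow> ('k, 'g, 'x \<Rightarrow> 'k) skew_module"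
where
  "perm_module G \<sigma> X a =
     \<lparr>vcarr = {F. finite {p. F p \<noteq> 0} \<and> {p. F p \<noteq> 0} \<subseteq> X}, vzero = (\<lambda>p. 0),
      vadd = (\<lambda>F F' p. F p + F' p), vsmul = (\<lambda>c F p. c * F p),
      vact = (\<lambda>g F p. if p \<in> X then \<sigma> g (F (a (inv\<^bsub>G\<^esub> g) p)) else 0)\<rparr>"

lemma perm_module_simps:
  "vcarr (perm_module G \<sigma> X a) = {F. finite {p. F p \<noteq> 0} \<and> {p. F p \<noteq> 0} \<subseteq> X}"
  "vzero (perm_module G \<sigma> X a) = (\<lambda>p. 0)"
  "vadd (perm_module G \<sigma> X a) F F' = (\<lambda>p. F p + F' p)"
  "vsmul (perm_module G \<sigma> X a) c F = (\<lambda>p. c * F p)"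
  "vact (perm_module G \<sigma> X a) g F = (\<lambda>p. if p \<in> X then \<sigma> g (F (a (inv\<^bsub>G\<^esub> g) p)) else 0)"
  by (simp_all add: perm_module_def)

context
  fixes G :: "'g monoid" (structure) and \<sigma> :: "'g \<Rightarrow> 'k::field \<Rightarrow> 'k" and X :: "'x set"
    and a :: "'g \<Rightarrow> 'x \<Rightarrow> 'x"
  assumes grp: "group G" and fa: "field_action G \<sigma>" and act: "set_action G X a"
begin

interpretation group G by (rule grp)

lemma perm_module_support_act:
  assumes g: "g \<in> carrier G" and F: "F \<in> vcarr (perm_module G \<sigma> X a)"
  shows "{p. vact (perm_module G \<sigma> X a) g F p \<noteq> 0} \<subseteq> a g ` {p. F p \<noteq> 0}"
proof
  fix p assume "p \<in> {p. vact (perm_module G \<sigma> X a) g F p \<noteq> 0}"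
  then have p: "p \<in> X" and "\<sigma> g (F (a (inv g) p)) \<noteq> 0"
    by (auto simp: perm_module_simps split: if_splits)
  then have "F (a (inv g) p) \<noteq> 0" using field_action_zero[OF fa g] by auto
  moreover have "p = a g (a (inv g) p)" using set_action_inv_cancel(2)[OF grp act g p] by simp
  ultimately show "p \<in> a g ` {p. F p \<noteq> 0}" by blast
qed

lemma skew_group_module_perm_module: "skew_group_module G \<sigma> (perm_module G \<sigma> X a)"
proof -
  let ?M = "perm_module G \<sigma> X a"
  have add: "vadd ?M F F' \<in> vcarr ?M" if "F \<in> vcarr ?M" "F' \<in> vcarr ?M" for F F'
  proof -
    have "{p. F p + F' p \<noteq> 0} \<subseteq> {p. F p \<noteq> 0} \<union> {p. F' p \<noteq> 0}" by auto
    then show ?thesis using that by (auto simp: perm_module_simps intro: finite_subset)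
  qed
  have smult: "vsmul ?M c F \<in> vcarr ?M" if "F \<in> vcarr ?M" for c F
  proof -
    have "{p. c * F p \<noteq> 0} \<subseteq> {p. F p \<noteq> 0}" by auto
    then show ?thesis using that by (auto simp: perm_module_simps intro: finite_subset)
  qed
  have act_closed: "vact ?M g F \<in> vcarr ?M" if "g \<in> carrier G" "F \<in> vcarr ?M" for g F
    using finite_subset[OF perm_module_support_act[OF that]] that
    by (auto simp: perm_module_simps split: if_splits)
  have inverse: "\<exists>F'\<in>vcarr ?M. vadd ?M F F' = vzero ?M" if "F \<in> vcarr ?M" for F
    by (rule bexI[of _ "\<lambda>p. - F p"]) (use that in \<open>auto simp: perm_module_simps\<close>)
  have act_one: "vact ?M \<one> F = F" if "F \<in> vcarr ?M" for F
    using that act field_action_def[of G \<sigma>] fa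
    by (auto simp: perm_module_simps set_action_def fun_eq_iff)
  have act_mult: "vact ?M (g \<otimes> h) F = vact ?M g (vact ?M h F)"
    if "g \<in> carrier G" "h \<in> carrier G" "F \<in> vcarr ?M" for g h F
  proof -
    have "a (inv (g \<otimes> h)) p = a (inv h) (a (inv g) p)" if "p \<in> X" for p
      using act that \<open>g \<in> carrier G\<close> \<open>h \<in> carrier G\<close> by (simp add: inv_mult_group set_action_def)
    moreover have "a (inv g) p \<in> X" if "p \<in> X" for p
      using act that \<open>g \<in> carrier G\<close> by (simp add: set_action_def)
    ultimately show ?thesis
      using that fa by (auto simp: perm_module_simps fun_eq_iff field_action_def)
  qed
  have field: "\<sigma> g (c + d) = \<sigma> g c + \<sigma> g d" "\<sigma> g (c * d) = \<sigma> g c * \<sigma> g d" if "g \<in> carrier G" for g c d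
    using fa that by (simp_all add: field_action_def)
  show ?thesis
    unfolding skew_group_module_def Let_def
    using add smult act_closed inverse act_one act_mult
    by (auto simp: perm_module_simps algebra_simps field field_action_zero[OF fa] fun_eq_iff)
qed

lemma perm_module_fixedI:
  assumes F: "F \<in> vcarr (perm_module G \<sigma> X a)" and w: "w \<in> carrier G"
    and fixing: "\<And>p. F p \<noteq> 0 \<Longrightarrow> a w p = p \<and> \<sigma> w (F p) = F p"
  shows "vact (perm_module G \<sigma> X a) w F = F"
proof
  fix p
  show "vact (perm_module G \<sigma> X a) w F p = F p"
  proof (cases "p \<in> X")
    case False
    then show ?thesis using F by (auto simp: perm_module_simps)
  next
    case p: True
    let ?q = "a (inv w) p"
    show ?thesis
    proof (cases "F ?q = 0 \<and> F p = 0")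
      case True
      then show ?thesis using p field_action_zero[OF fa w] by (simp add: perm_module_simps)
    next
      case False
      then have "?q = p" using fixing set_action_inv_cancel[OF grp act w p] by metis
      then show ?thesis using p fixing False by (auto simp: perm_module_simps)
    qed
  qed
qed

lemma perm_module_fixed_support:
  assumes F: "F \<in> vcarr (perm_module G \<sigma> X a)" and u: "u \<in> carrier G"
    and fixed: "vact (perm_module G \<sigma> X a) u F = F" and p: "F p \<noteq> 0"
  shows "F (a u p) \<noteq> 0"
proof -
  have pX: "p \<in> X" using F p by (auto simp: perm_module_simps)
  then have "vact (perm_module G \<sigma> X a) u F (a u p) = \<sigma> u (F p)"
    using act u set_action_inv_cancel(1)[OF grp act u pX] by (simp add: perm_module_simps set_action_def)
  then show ?thesis using fixed p field_action_eq_zero_iff[OF fa u] by simp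
qed

lemma smooth_perm_module:
  assumes tg: "topological_group G T"
    and stab_X: "\<And>p. p \<in> X \<Longrightarrow> openin T (stabilizer G a p)"
    and stab_K: "\<And>c. openin T (stabilizer G \<sigma> c)"
  shows "smooth_module G T \<sigma> (perm_module G \<sigma> X a)"
proof -
  let ?M = "perm_module G \<sigma> X a"
  note skew = skew_group_module_perm_module
  have "openin T (stabilizer G (vact ?M) F)" if F: "F \<in> vcarr ?M" for F
  proof -
    let ?S = "{p. F p \<noteq> 0}"
    have SX: "?S \<subseteq> X" and fin: "finite ?S" using F by (auto simp: perm_module_simps)
    let ?W = "(\<Inter>p\<in>?S. stabilizer G a p \<inter> stabilizer G \<sigma> (F p)) \<inter> topspace T"
    have sub: "subgroup (stabilizer G a p) G" "subgroup (stabilizer G \<sigma> c) G" if "p \<in> X" for p c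
      using subgroup_stabilizer[OF grp act that] subgroup_stabilizer[OF grp set_action_field_action[OF fa]]
      by simp_all
    show ?thesis
    proof (rule openin_subgroupI[OF tg _ _ _ subsetI])
      show "subgroup (stabilizer G (vact ?M) F) G"
        by (rule subgroup_stabilizer[OF grp set_action_skew_group_module[OF skew] F])
      show "openin T ?W" using fin SX stab_X stab_K by (intro openin_INT openin_Int) auto
      show "\<one> \<in> ?W"
        using sub SX subgroup.one_closed topological_groupD(2)[OF tg] by fastforce
      show "w \<in> stabilizer G (vact ?M) F" if "w \<in> ?W" for w
        using that perm_module_fixedI[OF F, of w] topological_groupD(2)[OF tg]
        by (auto simp: stabilizer_def)
    qed
  qed
  then show ?thesis using skew by (simp add: smooth_module_def stabilizer_def)
qed

end

definition linear_extension :: "('k::field, 'g, 'v) skew_module \<Rightarrow> ('x \<Rightarrow> 'v) \<Rightarrow> ('x \<Rightarrow> 'k) \<Rightarrow> 'v" where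
  "linear_extension P \<pi> F = vsum P (\<lambda>p. vsmul P (F p) (\<pi> p)) {p. F p \<noteq> 0}"

context
  fixes G :: "'g monoid" (structure) and \<sigma> :: "'g \<Rightarrow> 'k::field \<Rightarrow> 'k" and X :: "'x set"
    and a :: "'g \<Rightarrow> 'x \<Rightarrow> 'x" and P :: "('k, 'g, 'v) skew_module" and \<pi> :: "'x \<Rightarrow> 'v"
  assumes grp: "group G" and fa: "field_action G \<sigma>" and act: "set_action G X a"
    and skew: "skew_group_module G \<sigma> P"
    and \<pi>_closed: "\<And>p. p \<in> X \<Longrightarrow> \<pi> p \<in> vcarr P"
    and \<pi>_equivariant: "\<And>g p. g \<in> carrier G \<Longrightarrow> p \<in> X \<Longrightarrow> \<pi> (a g p) = vact P g (\<pi> p)"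
begin

interpretation P: skew_group_mod G \<sigma> P by (rule skew_group_mod.intro[OF skew])
interpretation M: skew_group_mod G \<sigma> "perm_module G \<sigma> X a"
  by (rule skew_group_mod.intro[OF skew_group_module_perm_module[OF grp fa act]])

lemma linear_extension_term_closed: "p \<in> X \<Longrightarrow> vsmul P c (\<pi> p) \<in> vcarr P"
  using P.smult_closed \<pi>_closed by blast

lemma linear_extension_superset:
  assumes F: "F \<in> vcarr (perm_module G \<sigma> X a)" and B: "finite B" "{p. F p \<noteq> 0} \<subseteq> B" "B \<subseteq> X"
  shows "linear_extension P \<pi> F = vsum P (\<lambda>p. vsmul P (F p) (\<pi> p)) B"
  unfolding linear_extension_def
  using B linear_extension_term_closed P.smult_zero_left \<pi>_closed by (intro P.vsum_mono_neutral) auto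

lemma linear_extension_add:
  assumes F: "F \<in> vcarr (perm_module G \<sigma> X a)" and F': "F' \<in> vcarr (perm_module G \<sigma> X a)"
  shows "linear_extension P \<pi> (vadd (perm_module G \<sigma> X a) F F')
       = vadd P (linear_extension P \<pi> F) (linear_extension P \<pi> F')"
proof -
  let ?B = "{p. F p \<noteq> 0} \<union> {p. F' p \<noteq> 0}"
  have B: "finite ?B" "?B \<subseteq> X" using F F' by (auto simp: perm_module_simps)
  have "linear_extension P \<pi> (vadd (perm_module G \<sigma> X a) F F')
      = vsum P (\<lambda>p. vsmul P (F p + F' p) (\<pi> p)) ?B"
  proof -
    have "{p. vadd (perm_module G \<sigma> X a) F F' p \<noteq> 0} \<subseteq> ?B" by (auto simp: perm_module_simps)
    from linear_extension_superset[OF M.add_closed[OF F F'] B(1) this B(2)]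
    show ?thesis by (simp add: perm_module_simps)
  qed
  also have "\<dots> = vsum P (\<lambda>p. vadd P (vsmul P (F p) (\<pi> p)) (vsmul P (F' p) (\<pi> p))) ?B"
    using B(2) \<pi>_closed linear_extension_term_closed by (intro P.vsum_cong) (auto simp: P.smult_add_left P.add_closed)
  also have "\<dots> = vadd P (linear_extension P \<pi> F) (linear_extension P \<pi> F')"
    using B(2) linear_extension_term_closed linear_extension_superset[OF F B(1) _ B(2)]
      linear_extension_superset[OF F' B(1) _ B(2)]
    by (subst P.vsum_add) auto
  finally show ?thesis .
qed

lemma linear_extension_smult:
  assumes F: "F \<in> vcarr (perm_module G \<sigma> X a)"
  shows "linear_extension P \<pi> (vsmul (perm_module G \<sigma> X a) c F) = vsmul P c (linear_extension P \<pi> F)"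
proof -
  let ?B = "{p. F p \<noteq> 0}"
  have B: "finite ?B" "?B \<subseteq> X" using F by (auto simp: perm_module_simps)
  have "linear_extension P \<pi> (vsmul (perm_module G \<sigma> X a) c F) = vsum P (\<lambda>p. vsmul P (c * F p) (\<pi> p)) ?B"
  proof -
    have "{p. vsmul (perm_module G \<sigma> X a) c F p \<noteq> 0} \<subseteq> ?B" by (auto simp: perm_module_simps)
    from linear_extension_superset[OF M.smult_closed[OF F] B(1) this B(2)]
    show ?thesis by (simp add: perm_module_simps)
  qed
  also have "\<dots> = vsum P (\<lambda>p. vsmul P c (vsmul P (F p) (\<pi> p))) ?B"
    using B(2) \<pi>_closed linear_extension_term_closed by (intro P.vsum_cong) (auto simp: P.smult_mult P.smult_closed)
  also have "\<dots> = vsmul P c (linear_extension P \<pi> F)"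
    unfolding linear_extension_def using B(2) linear_extension_term_closed
    by (intro P.additive_vsum[symmetric]) (auto simp: P.smult_closed P.smult_add_right P.smult_zero_right)
  finally show ?thesis .
qed

lemma linear_extension_act:
  assumes F: "F \<in> vcarr (perm_module G \<sigma> X a)" and g: "g \<in> carrier G"
  shows "linear_extension P \<pi> (vact (perm_module G \<sigma> X a) g F) = vact P g (linear_extension P \<pi> F)"
proof -
  let ?B = "{p. F p \<noteq> 0}" and ?gF = "vact (perm_module G \<sigma> X a) g F"
  have B: "finite ?B" "?B \<subseteq> X" using F by (auto simp: perm_module_simps)
  have gB: "a g ` ?B \<subseteq> X" using B(2) act g by (auto simp: set_action_def)
  have inj: "inj_on (a g) ?B"
    using B(2) set_action_inv_cancel(1)[OF grp act g] by (metis inj_on_inverseI subsetD)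
  have "linear_extension P \<pi> ?gF = vsum P (\<lambda>p. vsmul P (?gF p) (\<pi> p)) (a g ` ?B)"
    using linear_extension_superset[OF M.act_closed[OF g F] _ perm_module_support_act[OF grp fa act g F] gB]
      B(1) by simp
  also have "\<dots> = vsum P (\<lambda>q. vsmul P (?gF (a g q)) (\<pi> (a g q))) ?B"
    using gB linear_extension_term_closed by (intro P.vsum_reindex[OF inj]) auto
  also have "\<dots> = vsum P (\<lambda>q. vact P g (vsmul P (F q) (\<pi> q))) ?B"
  proof (rule P.vsum_cong)
    fix q assume "q \<in> ?B"
    then have q: "q \<in> X" using B(2) by blast
    then have "a g q \<in> X" using act g by (simp add: set_action_def)
    then show "vsmul P (?gF (a g q)) (\<pi> (a g q)) = vact P g (vsmul P (F q) (\<pi> q))"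
      using set_action_inv_cancel(1)[OF grp act g q] \<pi>_equivariant[OF g q] P.act_smult[OF g \<pi>_closed[OF q]]
      by (simp add: perm_module_simps)
    show "vact P g (vsmul P (F q) (\<pi> q)) \<in> vcarr P" using P.act_closed[OF g linear_extension_term_closed[OF q]] .
  qed
  also have "\<dots> = vact P g (linear_extension P \<pi> F)"
    unfolding linear_extension_def using B(2) linear_extension_term_closed
    by (intro P.additive_vsum[symmetric]) (auto simp: g P.act_closed P.act_add P.act_zero)
  finally show ?thesis .
qed

lemma skew_hom_linear_extension: "skew_hom G (perm_module G \<sigma> X a) P (linear_extension P \<pi>)"
proof -
  have "linear_extension P \<pi> F \<in> vcarr P" if "F \<in> vcarr (perm_module G \<sigma> X a)" for F
    unfolding linear_extension_def using that linear_extension_term_closed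
    by (intro P.vsum_closed) (auto simp: perm_module_simps)
  then show ?thesis
    unfolding skew_hom_def using linear_extension_add linear_extension_smult linear_extension_act by blast
qed

lemma linear_extension_surj:
  assumes "vcarr P \<subseteq> \<pi> ` X"
  shows "linear_extension P \<pi> ` vcarr (perm_module G \<sigma> X a) = vcarr P"
proof
  show "linear_extension P \<pi> ` vcarr (perm_module G \<sigma> X a) \<subseteq> vcarr P"
    using skew_hom_linear_extension by (auto simp: skew_hom_def)
  show "vcarr P \<subseteq> linear_extension P \<pi> ` vcarr (perm_module G \<sigma> X a)"
  proof
    fix y assume "y \<in> vcarr P"
    then obtain p where p: "p \<in> X" "y = \<pi> p" using assms by blast
    define F :: "'x \<Rightarrow> 'k" where "F = (\<lambda>q. if q = p then 1 else 0)"
    have supp: "{q. F q \<noteq> 0} = {p}" by (auto simp: F_def)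
    then have "F \<in> vcarr (perm_module G \<sigma> X a)" using p(1) by (simp add: perm_module_simps)
    moreover have "linear_extension P \<pi> F = vsmul P (F p) (\<pi> p)"
      unfolding linear_extension_def supp by (rule P.vsum_singleton[of "\<lambda>q. vsmul P (F q) (\<pi> q)", OF linear_extension_term_closed[OF p(1)]])
    then have "linear_extension P \<pi> F = y"
      using p P.smult_one[OF \<pi>_closed[OF p(1)]] by (simp add: F_def)
    ultimately show "y \<in> linear_extension P \<pi> ` vcarr (perm_module G \<sigma> X a)" by blast
  qed
qed

end

section \<open>Projectivity\<close>

definition transport_module :: "('v \<Rightarrow> 'w) \<Rightarrow> ('k, 'g, 'v) skew_module \<Rightarrow> ('k, 'g, 'w) skew_module" where
  "transport_module e P =
     \<lparr>vcarr = e ` vcarr P, vzero = e (vzero P),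
      vadd = (\<lambda>x y. e (vadd P (the_inv e x) (the_inv e y))), vsmul = (\<lambda>c x. e (vsmul P c (the_inv e x))),
      vact = (\<lambda>g x. e (vact P g (the_inv e x)))\<rparr>"

lemma smooth_module_transport:
  assumes e: "inj e" and P: "smooth_module G T \<sigma> P"
  shows "smooth_module G T \<sigma> (transport_module e P)"
proof -
  have skew: "skew_group_module G \<sigma> P" using P by (simp add: smooth_module_def)
  have "skew_group_module G \<sigma> (transport_module e P)"
  proof -
    have "\<exists>y\<in>e ` vcarr P. e (vadd P x (the_inv e y)) = e (vzero P)" if x: "x \<in> vcarr P" for x
    proof -
      obtain y where "y \<in> vcarr P" "vadd P x y = vzero P"
        using skew_group_mod.add_inverse[OF skew_group_mod.intro[OF skew] x] by blast
      then show ?thesis using e by (intro bexI[of _ "e y"]) (auto simp: the_inv_f_f)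
    qed
    with skew e show ?thesis
      by (auto simp: skew_group_module_def Let_def transport_module_def the_inv_f_f)
  qed
  moreover have "{g \<in> carrier G. vact (transport_module e P) g (e y) = e y} = {g \<in> carrier G. vact P g y = y}"
    for y using e by (auto simp: transport_module_def the_inv_f_f inj_eq)
  ultimately show ?thesis using P by (auto simp: smooth_module_def transport_module_def)
qed

lemma skew_hom_transport:
  assumes "inj e" "skew_group_module G \<sigma> P"
  shows "skew_hom G P (transport_module e P) e"
  using assms by (auto simp: skew_hom_def transport_module_def skew_group_module_def Let_def the_inv_f_f)

lemma skew_hom_comp:
  "skew_hom G M N f \<Longrightarrow> skew_hom G N L h \<Longrightarrow> skew_hom G M L (h \<circ> f)"
  by (simp add: skew_hom_def)

lemma stabilizer_subset_skew_hom:
  assumes "skew_hom G P M l" "v \<in> vcarr P"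
  shows "stabilizer G (vact P) v \<subseteq> stabilizer G (vact M) (l v)"
  using assms unfolding skew_hom_def stabilizer_def by force

lemma sm_projective_section:
  fixes P :: "('k::field, 'g, 'v) skew_module" and M :: "('k, 'g, 'v \<times> 'g set \<Rightarrow> 'k) skew_module"
  assumes proj: "sm_projective G T \<sigma> P" and P: "smooth_module G T \<sigma> P"
    and M: "smooth_module G T \<sigma> M" and f: "skew_hom G M P f" "f ` vcarr M = vcarr P"
  shows "\<exists>l. skew_hom G P M l \<and> (\<forall>x\<in>vcarr P. f (l x) = x)"
proof -
  txt \<open>Projectivity is only tested on the type \<open>'v \<times> 'g set \<Rightarrow> 'k\<close>; copy \<open>P\<close> into it.\<close>
  define e :: "'v \<Rightarrow> 'v \<times> 'g set \<Rightarrow> 'k" where "e = (\<lambda>y. indicator {(y, {})})"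
  have e: "inj e"
  proof (rule injI)
    fix y y' assume "e y = e y'"
    then have "e y (y, {}) = e y' (y, {})" by simp
    then show "y = y'" by (cases "y = y'") (auto simp: e_def)
  qed
  have skew: "skew_group_module G \<sigma> P" using P by (simp add: smooth_module_def)
  have "skew_hom G M (transport_module e P) (e \<circ> f)"
    by (rule skew_hom_comp[OF f(1) skew_hom_transport[OF e skew]])
  moreover have "(e \<circ> f) ` vcarr M = vcarr (transport_module e P)"
    unfolding image_comp[symmetric] by (simp only: f(2)) (simp add: transport_module_def)
  moreover note smooth_module_transport[OF e P] skew_hom_transport[OF e skew]
  ultimately obtain l where "skew_hom G P M l" "\<forall>x\<in>vcarr P. e (f (l x)) = e x"
    using proj M unfolding sm_projective_in_def comp_def by blast
  then show ?thesis using e by (auto simp: inj_eq)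
qed

section \<open>The permutation module on vectors and cosets\<close>

definition lcoset_perm_module ::
  "'g monoid \<Rightarrow> ('g \<Rightarrow> 'k::field \<Rightarrow> 'k) \<Rightarrow> ('k, 'g, 'v) skew_module \<Rightarrow> 'g set
     \<Rightarrow> ('k, 'g, 'v \<times> 'g set \<Rightarrow> 'k) skew_module" where
  "lcoset_perm_module G \<sigma> P H =
     perm_module G \<sigma> (vcarr P \<times> lcosets\<^bsub>G\<^esub> H) (\<lambda>g. map_prod (vact P g) (l_coset G g))"

lemma set_action_lcoset_pairs:
  assumes "group G" "skew_group_module G \<sigma> P" "subgroup H G"
  shows "set_action G (vcarr P \<times> lcosets\<^bsub>G\<^esub> H) (\<lambda>g. map_prod (vact P g) (l_coset G g))"
  by (rule set_action_map_prod[OF set_action_skew_group_module[OF assms(2)] set_action_lcosets[OF assms(1,3)]])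

lemma lcoset_perm_module_onto:
  assumes grp: "group G" and fa: "field_action G \<sigma>" and skew: "skew_group_module G \<sigma> P"
    and H: "subgroup H G"
  shows "skew_hom G (lcoset_perm_module G \<sigma> P H) P (linear_extension P fst)"
    and "linear_extension P fst ` vcarr (lcoset_perm_module G \<sigma> P H) = vcarr P"
proof -
  note act = set_action_lcoset_pairs[OF grp skew H]
  have fst: "\<And>p. p \<in> vcarr P \<times> lcosets\<^bsub>G\<^esub> H \<Longrightarrow> fst p \<in> vcarr P"
    "\<And>g p. fst (map_prod (vact P g) (l_coset G g) p) = vact P g (fst p)"
    by auto
  have "H \<in> lcosets\<^bsub>G\<^esub> H"
    using group.lcos_mult_one[OF grp subgroup.subset[OF H]] monoid.one_closed[OF group.is_monoid[OF grp]]
    unfolding LCOSETS_def by blast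
  then have "vcarr P \<subseteq> fst ` (vcarr P \<times> lcosets\<^bsub>G\<^esub> H)" by auto
  then show "skew_hom G (lcoset_perm_module G \<sigma> P H) P (linear_extension P fst)"
    and "linear_extension P fst ` vcarr (lcoset_perm_module G \<sigma> P H) = vcarr P"
    unfolding lcoset_perm_module_def
    using skew_hom_linear_extension[OF grp fa act skew fst] linear_extension_surj[OF grp fa act skew fst]
    by blast+
qed

lemma smooth_lcoset_perm_module:
  assumes tg: "topological_group G T" and fa: "field_action G \<sigma>"
    and P: "smooth_module G T \<sigma> P" and v: "v \<in> vcarr P" "v \<noteq> vzero P"
    and H: "open_subgroup G T H"
  shows "smooth_module G T \<sigma> (lcoset_perm_module G \<sigma> P H)"
  unfolding lcoset_perm_module_def
proof (rule smooth_perm_module[OF topological_groupD(1)[OF tg] fa _ tg])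
  have H': "subgroup H G" "openin T H" using H by (simp_all add: open_subgroup_def)
  have skew: "skew_group_module G \<sigma> P" using P by (simp add: smooth_module_def)
  show "set_action G (vcarr P \<times> lcosets\<^bsub>G\<^esub> H) (\<lambda>g. map_prod (vact P g) (l_coset G g))"
    by (rule set_action_lcoset_pairs[OF topological_groupD(1)[OF tg] skew H'(1)])
  show "openin T (stabilizer G \<sigma> c)" for c by (rule openin_field_stabilizer[OF tg fa P v])
  fix p assume "p \<in> vcarr P \<times> lcosets\<^bsub>G\<^esub> H"
  then obtain y C where p: "p = (y, C)" "y \<in> vcarr P" "C \<in> lcosets\<^bsub>G\<^esub> H" by blast
  have "openin T (stabilizer G (vact P) y)"
    using open_subgroup_stabilizer[OF tg P p(2)] by (simp add: open_subgroup_def)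
  moreover have "openin T (stabilizer G (l_coset G) C)"
    using openin_lcoset_stabilizer[OF tg H' p(3)] by simp
  ultimately show "openin T (stabilizer G (\<lambda>g. map_prod (vact P g) (l_coset G g)) p)"
    by (simp add: p(1) stabilizer_map_prod openin_Int)
qed

lemma lcoset_perm_module_fixed_eq_zero:
  assumes grp: "group G" and fa: "field_action G \<sigma>" and skew: "skew_group_module G \<sigma> P"
    and U: "subgroup U G" and H: "subgroup H G"
    and index: "\<forall>x\<in>carrier G. infinite_index G (conj_set G x H \<inter> U) U"
    and F: "F \<in> vcarr (lcoset_perm_module G \<sigma> P H)"
    and fixed: "U \<subseteq> stabilizer G (vact (lcoset_perm_module G \<sigma> P H)) F"
  shows "F = (\<lambda>p. 0)"
proof (rule ccontr)
  assume "F \<noteq> (\<lambda>p. 0)"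
  then obtain y C where p: "F (y, C) \<noteq> 0" by fastforce
  then have "C \<in> lcosets\<^bsub>G\<^esub> H" using F by (auto simp: lcoset_perm_module_def perm_module_simps)
  then obtain x where x: "x \<in> carrier G" "C = l_coset G x H" by (auto simp: LCOSETS_def)
  have "(\<lambda>u. (vact P u y, l_coset G u C)) ` U \<subseteq> {p. F p \<noteq> 0}"
    using perm_module_fixed_support[OF grp fa set_action_lcoset_pairs[OF grp skew H] F[unfolded lcoset_perm_module_def] _ _ p]
      fixed by (auto simp: lcoset_perm_module_def stabilizer_def)
  then have "finite ((\<lambda>u. (vact P u y, l_coset G u C)) ` U)"
    using F finite_subset by (auto simp: lcoset_perm_module_def perm_module_simps)
  then have "finite (snd ` (\<lambda>u. (vact P u y, l_coset G u C)) ` U)" by (rule finite_imageI)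
  then have "finite ((\<lambda>u. l_coset G u (l_coset G x H)) ` U)"
    by (simp add: image_image x(2))
  then show False
    using finite_orbit_imp_finite_index[OF grp U H x(1)] index x(1) by blast
qed

theorem lemma3p4:
  fixes G :: "'g monoid" and T :: "'g topology" and \<sigma> :: "'g \<Rightarrow> 'k::field \<Rightarrow> 'k"
    and P :: "('k, 'g, 'v) skew_module"
  assumes "permutation_group G T"
    and "field_action G \<sigma>"
    and "\<forall>U. open_subgroup G T U \<longrightarrow>
           (\<exists>U'. open_subgroup G T U' \<and> U' \<subseteq> U \<and>
                 (\<forall>g\<in>carrier G. infinite_index G (conj_set G g U' \<inter> U) U))"
    and "smooth_module G T \<sigma> P"
    and "vcarr P \<noteq> {vzero P}"
  shows "\<not> sm_projective G T \<sigma> P"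
proof
  assume proj: "sm_projective G T \<sigma> P"
  have tg: "topological_group G T" using assms(1) by (simp add: permutation_group_def)
  note grp = topological_groupD(1)[OF tg]
  have skew: "skew_group_module G \<sigma> P" using assms(4) by (simp add: smooth_module_def)
  interpret P: skew_group_mod G \<sigma> P by (rule skew_group_mod.intro[OF skew])
  obtain v where v: "v \<in> vcarr P" "v \<noteq> vzero P" using assms(5) P.zero_closed by blast
  let ?U = "stabilizer G (vact P) v"
  have U: "open_subgroup G T ?U" by (rule open_subgroup_stabilizer[OF tg assms(4) v(1)])
  then obtain U' where U': "open_subgroup G T U'" "\<forall>x\<in>carrier G. infinite_index G (conj_set G x U' \<inter> ?U) ?U"
    using assms(3) by blast
  then have U'_sub: "subgroup U' G" by (simp add: open_subgroup_def)
  let ?M = "lcoset_perm_module G \<sigma> P U'"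
  obtain l where l: "skew_hom G P ?M l" "\<forall>x\<in>vcarr P. linear_extension P fst (l x) = x"
    using sm_projective_section[OF proj assms(4) smooth_lcoset_perm_module[OF tg assms(2,4) v U'(1)]
        lcoset_perm_module_onto[OF grp assms(2) skew U'_sub]] by blast
  have "l v = (\<lambda>p. 0)"
  proof (rule lcoset_perm_module_fixed_eq_zero[OF grp assms(2) skew _ U'_sub U'(2)])
    show "subgroup ?U G" using U by (simp add: open_subgroup_def)
    show "l v \<in> vcarr ?M" using l(1) v(1) by (simp add: skew_hom_def)
    show "?U \<subseteq> stabilizer G (vact ?M) (l v)" by (rule stabilizer_subset_skew_hom[OF l(1) v(1)])
  qed
  then have "v = vzero P" using l(2)[rule_format, OF v(1)] by (simp add: linear_extension_def)
  with v(2) show False ..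
qed

end
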